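(* Let $\{a_n\}_{n=1}^\infty\subset(0,1]$ and define $P_n,Q_n:\{-1,1\}^n\to\mathbb{R}$ by $P_0\equiv Q_0\equiv 1$ and \[ P_{n+1}=P_n+\varepsilon_{n+1}a_{n+1}Q_n,\qquad Q_{n+1}=\varepsilon_{n+1}a_{n+1}P_n-Q_n,\qquad n=0,1,\dots \] Then for each $n=1,2,\dots$, \[ H(\hat P_n^2)=H(\hat Q_n^2)=-\sum_{i=1}^n\Big(\prod_{1\le j\le n,\ j\ne i}(1+a_j^2)\Big)a_i^2\log a_i^2. \]
   Context: Here $\varepsilon_i$ denotes the $i$-th coordinate function $\varepsilon_i(\delta_1,\dots,\delta_m)=\delta_i$ on $\{-1,1\}^m$ for $m\ge i$ (functions on $\{-1,1\}^n$ are regarded as functions on $\{-1,1\}^{n+1}$ not depending on the last coordinate). For $A\subseteq[n]$, $W_A=\prod_{i\in A}\varepsilon_i$ and, for $g:\{-1,1\}^n\to\mathbb{R}$, $\hat g(A)=2^{-n}\sum_{\delta\in\{-1,1\}^n}g(\delta)W_A(\delta)$. The (Fourier) entropy of $g$, defined also for non-normalized $g$, is $H(\hat g^2)=-\sum_{A\subseteq[n]}\hat g(A)^2\log\hat g(A)^2$ with $0\log 0=0$; logarithms are to base $2$. *)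

theory Defs
  imports Complex_Main
begin

text \<open>Points of the cube {-1,1}^n are represented as functions nat => real with
  values in {-1,1} on the coordinates 1..n and value 0 elsewhere (canonical extension).\<close>
definition cube :: "nat \<Rightarrow> (nat \<Rightarrow> real) set" where
  "cube n = {\<delta>. (\<forall>i\<in>{1..n}. \<delta> i \<in> {-1, 1}) \<and> (\<forall>i. i \<notin> {1..n} \<longrightarrow> \<delta> i = 0)}"

definition walsh :: "nat set \<Rightarrow> (nat \<Rightarrow> real) \<Rightarrow> real" where
  "walsh A \<delta> = (\<Prod>i\<in>A. \<delta> i)"

definition fourier :: "nat \<Rightarrow> ((nat \<Rightarrow> real) \<Rightarrow> real) \<Rightarrow> nat set \<Rightarrow> real" where
  "fourier n g A = (1 / 2 ^ n) * (\<Sum>\<delta>\<in>cube n. g \<delta> * walsh A \<delta>)"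

definition xlogx :: "real \<Rightarrow> real" where
  "xlogx x = (if x = 0 then 0 else x * log 2 x)"

definition fourier_entropy :: "nat \<Rightarrow> ((nat \<Rightarrow> real) \<Rightarrow> real) \<Rightarrow> real" where
  "fourier_entropy n g = - (\<Sum>A\<in>Pow {1..n}. xlogx ((fourier n g A)^2))"

fun PQ :: "(nat \<Rightarrow> real) \<Rightarrow> nat \<Rightarrow> (nat \<Rightarrow> real) \<Rightarrow> real \<times> real" where
  "PQ a 0 \<delta> = (1, 1)"
| "PQ a (Suc n) \<delta> = (let (p, q) = PQ a n \<delta> in
      (p + \<delta> (Suc n) * a (Suc n) * q, \<delta> (Suc n) * a (Suc n) * p - q))"

definition Pn :: "(nat \<Rightarrow> real) \<Rightarrow> nat \<Rightarrow> (nat \<Rightarrow> real) \<Rightarrow> real" where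
  "Pn a n \<delta> = fst (PQ a n \<delta>)"

definition Qn :: "(nat \<Rightarrow> real) \<Rightarrow> nat \<Rightarrow> (nat \<Rightarrow> real) \<Rightarrow> real" where
  "Qn a n \<delta> = snd (PQ a n \<delta>)"

end

theory Submission
  imports Defs
begin

text \<open>Write \<open>g(\<delta>, s)\<close> for \<open>g\<close> on \<open>{-1,1}\<^sup>n\<^sup>+\<^sup>1\<close> with last coordinate \<open>s\<close>. If
  \<open>g(\<delta>, s) = u(\<delta>) + s v(\<delta>)\<close>, the Fourier coefficient of \<open>g\<close> at \<open>A\<close> is that of \<open>u\<close> at \<open>A\<close>
  when \<open>n+1 \<notin> A\<close> and that of \<open>v\<close> at \<open>A - {n+1}\<close> otherwise. The recursion has this shape
  with \<open>(u, v) = (P\<^sub>n, a\<^sub>n\<^sub>+\<^sub>1 Q\<^sub>n)\<close> for \<open>P\<^sub>n\<^sub>+\<^sub>1\<close> and \<open>(u, v) = (-Q\<^sub>n, a\<^sub>n\<^sub>+\<^sub>1 P\<^sub>n)\<close> for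
  \<open>Q\<^sub>n\<^sub>+\<^sub>1\<close>, so by induction both \<open>P\<^sub>n\<close> and \<open>Q\<^sub>n\<close> have squared coefficients
  \<open>w(A) = \<Prod>\<^sub>i\<^sub>\<in>\<^sub>A a\<^sub>i\<^sup>2\<close>. For such product weights \<open>w(A) log w(A) = \<Sum>\<^sub>i\<^sub>\<in>\<^sub>A w(A) log a\<^sub>i\<^sup>2\<close>;
  exchanging the two sums, the weights of the sets containing \<open>i\<close> add up to
  \<open>a\<^sub>i\<^sup>2 \<Prod>\<^sub>j\<^sub>\<noteq>\<^sub>i (1 + a\<^sub>j\<^sup>2)\<close>.\<close>

lemma cube_Suc: "cube (Suc n) = (\<lambda>(\<delta>, s). \<delta>(Suc n := s)) ` (cube n \<times> {-1, 1})"
proof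
  show "cube (Suc n) \<subseteq> (\<lambda>(\<delta>, s). \<delta>(Suc n := s)) ` (cube n \<times> {-1, 1})"
  proof
    fix \<delta> assume "\<delta> \<in> cube (Suc n)"
    then have "(\<delta>(Suc n := 0), \<delta> (Suc n)) \<in> cube n \<times> {-1, 1}"
      by (auto simp: cube_def)
    moreover have "\<delta> = (\<lambda>(\<delta>, s). \<delta>(Suc n := s)) (\<delta>(Suc n := 0), \<delta> (Suc n))"
      by simp
    ultimately show "\<delta> \<in> (\<lambda>(\<delta>, s). \<delta>(Suc n := s)) ` (cube n \<times> {-1, 1})"
      by blast
  qed
  show "(\<lambda>(\<delta>, s). \<delta>(Suc n := s)) ` (cube n \<times> {-1, 1}) \<subseteq> cube (Suc n)"
    by (auto simp: cube_def le_Suc_eq Ball_def)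
qed

lemma inj_on_cube_extend: "inj_on (\<lambda>(\<delta>, s). \<delta>(Suc n := s)) (cube n \<times> {-1, 1})"
proof (rule inj_onI, clarify)
  fix \<delta> s \<delta>' s'
  assume "\<delta> \<in> cube n" "\<delta>' \<in> cube n" and eq: "\<delta>(Suc n := s) = \<delta>'(Suc n := s')"
  then have zeros: "\<delta> (Suc n) = 0" "\<delta>' (Suc n) = 0"
    by (auto simp: cube_def)
  have "\<delta> = \<delta>'"
  proof
    fix i
    show "\<delta> i = \<delta>' i"
      using fun_cong[OF eq, of i] zeros by (cases "i = Suc n") auto
  qed
  then show "\<delta> = \<delta>' \<and> s = s'"
    using fun_cong[OF eq, of "Suc n"] by simp
qed

lemma sum_cube_Suc:
  "(\<Sum>\<delta>\<in>cube (Suc n). f \<delta>) = (\<Sum>\<delta>\<in>cube n. f (\<delta>(Suc n := -1)) + f (\<delta>(Suc n := 1)))"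
proof -
  have "(\<Sum>\<delta>\<in>cube (Suc n). f \<delta>) = (\<Sum>(\<delta>, s)\<in>cube n \<times> {-1, 1}. f (\<delta>(Suc n := s)))"
    unfolding cube_Suc sum.reindex[OF inj_on_cube_extend] by (simp add: case_prod_unfold)
  also have "\<dots> = (\<Sum>\<delta>\<in>cube n. \<Sum>s\<in>{-1, 1}. f (\<delta>(Suc n := s)))"
    by (rule sum.cartesian_product[symmetric])
  finally show ?thesis
    by simp
qed

lemma walsh_fun_upd:
  assumes "finite A"
  shows "walsh A (\<delta>(m := s)) = (if m \<in> A then s else 1) * walsh (A - {m}) \<delta>"
proof -
  have "walsh (A - {m}) (\<delta>(m := s)) = walsh (A - {m}) \<delta>"
    unfolding walsh_def by (rule prod.cong) auto
  then show ?thesis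
    using assms unfolding walsh_def by (cases "m \<in> A") (auto simp: prod.remove)
qed

lemma fourier_Suc:
  assumes "finite A"
    and g: "\<And>\<delta> s. \<delta> \<in> cube n \<Longrightarrow> g (\<delta>(Suc n := s)) = u \<delta> + s * v \<delta>"
  shows "fourier (Suc n) g A =
           (if Suc n \<in> A then fourier n v (A - {Suc n}) else fourier n u A)"
proof -
  have "(\<Sum>\<delta>\<in>cube (Suc n). g \<delta> * walsh A \<delta>) =
          2 * (\<Sum>\<delta>\<in>cube n. (if Suc n \<in> A then v \<delta> else u \<delta>) * walsh (A - {Suc n}) \<delta>)"
    unfolding sum_cube_Suc sum_distrib_left
    by (rule sum.cong) (auto simp: g walsh_fun_upd[OF assms(1)] algebra_simps)
  then show ?thesis
    unfolding fourier_def by (auto simp: sum.If_cases)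
qed

lemma fourier_cmult: "fourier n (\<lambda>\<delta>. c * f \<delta>) A = c * fourier n f A"
  unfolding fourier_def by (simp add: sum_distrib_left algebra_simps)

lemma fourier_uminus: "fourier n (\<lambda>\<delta>. - f \<delta>) A = - fourier n f A"
  unfolding fourier_def by (simp add: sum_negf)

lemma PQ_fun_upd_above: "n < m \<Longrightarrow> PQ a n (\<delta>(m := s)) = PQ a n \<delta>"
  by (induction n) (auto simp: Let_def split: prod.splits)

lemma Pn_Suc_fun_upd: "Pn a (Suc n) (\<delta>(Suc n := s)) = Pn a n \<delta> + s * (a (Suc n) * Qn a n \<delta>)"
  by (simp add: Pn_def Qn_def PQ_fun_upd_above split: prod.splits)

lemma Qn_Suc_fun_upd: "Qn a (Suc n) (\<delta>(Suc n := s)) = - Qn a n \<delta> + s * (a (Suc n) * Pn a n \<delta>)"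
  by (simp add: Pn_def Qn_def PQ_fun_upd_above split: prod.splits)

lemma fourier_Pn_Qn_squared:
  assumes "A \<subseteq> {1..n}"
  shows "(fourier n (Pn a n) A)\<^sup>2 = (\<Prod>i\<in>A. (a i)\<^sup>2) \<and> (fourier n (Qn a n) A)\<^sup>2 = (\<Prod>i\<in>A. (a i)\<^sup>2)"
  using assms
proof (induction n arbitrary: A)
  case 0
  have "cube 0 = {\<lambda>_. 0}"
    by (auto simp: cube_def)
  with 0 show ?case
    by (simp add: fourier_def walsh_def Pn_def Qn_def)
next
  case (Suc n)
  have "finite A"
    using Suc.prems finite_subset by blast
  note fourier_P = fourier_Suc[OF \<open>finite A\<close>, of n "Pn a (Suc n)", OF Pn_Suc_fun_upd]
  note fourier_Q = fourier_Suc[OF \<open>finite A\<close>, of n "Qn a (Suc n)", OF Qn_Suc_fun_upd]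
  show ?case
  proof (cases "Suc n \<in> A")
    case True
    have "A - {Suc n} \<subseteq> {1..n}"
      using Suc.prems by auto
    moreover have "(\<Prod>i\<in>A. (a i)\<^sup>2) = (a (Suc n))\<^sup>2 * (\<Prod>i\<in>A - {Suc n}. (a i)\<^sup>2)"
      using True \<open>finite A\<close> by (simp add: prod.remove)
    ultimately show ?thesis
      using Suc.IH True by (simp add: fourier_P fourier_Q fourier_cmult power_mult_distrib)
  next
    case False
    then have "A \<subseteq> {1..n}"
      using Suc.prems by (fastforce simp: le_Suc_eq)
    then show ?thesis
      using Suc.IH False by (simp add: fourier_P fourier_Q fourier_uminus)
  qed
qed

lemma sum_Pow_containing_prod:
  fixes b :: "'a \<Rightarrow> 'b::comm_semiring_1"
  assumes "finite S" "i \<in> S"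
  shows "(\<Sum>A\<in>{A\<in>Pow S. i \<in> A}. \<Prod>j\<in>A. b j) = b i * (\<Prod>j\<in>S - {i}. 1 + b j)"
proof -
  have sets_containing: "{A\<in>Pow S. i \<in> A} = insert i ` Pow (S - {i})"
  proof (intro equalityI subsetI)
    fix A assume "A \<in> {A\<in>Pow S. i \<in> A}"
    then have "A = insert i (A - {i})" "A - {i} \<in> Pow (S - {i})"
      by auto
    then show "A \<in> insert i ` Pow (S - {i})"
      by blast
  qed (use assms(2) in auto)
  have "inj_on (insert i) (Pow (S - {i}))"
    by (rule inj_onI) (metis Diff_insert_absorb PowD DiffD2 insertI1 subsetD)
  then have "(\<Sum>A\<in>{A\<in>Pow S. i \<in> A}. \<Prod>j\<in>A. b j) = (\<Sum>B\<in>Pow (S - {i}). \<Prod>j\<in>insert i B. b j)"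
    unfolding sets_containing by (rule sum.reindex[unfolded comp_def])
  also have "\<dots> = (\<Sum>B\<in>Pow (S - {i}). b i * (\<Prod>j\<in>B. b j))"
  proof (rule sum.cong[OF refl])
    fix B assume "B \<in> Pow (S - {i})"
    then have "finite B" "i \<notin> B"
      using assms(1) finite_subset by auto
    then show "(\<Prod>j\<in>insert i B. b j) = b i * (\<Prod>j\<in>B. b j)"
      by simp
  qed
  also have "\<dots> = b i * (\<Prod>j\<in>S - {i}. 1 + b j)"
    using prod_add[of "S - {i}" b "\<lambda>_. 1"] assms(1)
    by (simp add: sum_distrib_left add.commute)
  finally show ?thesis .
qed

lemma entropy_of_product_weights:
  fixes b :: "'a \<Rightarrow> real"
  assumes "finite S" "\<And>i. i \<in> S \<Longrightarrow> b i > 0"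
  shows "(\<Sum>A\<in>Pow S. xlogx (\<Prod>i\<in>A. b i)) =
           (\<Sum>i\<in>S. (\<Prod>j\<in>S - {i}. 1 + b j) * b i * log 2 (b i))"
proof -
  have "xlogx (\<Prod>i\<in>A. b i) = (\<Sum>i\<in>{i\<in>S. i \<in> A}. (\<Prod>j\<in>A. b j) * log 2 (b i))"
    if "A \<in> Pow S" for A
  proof -
    have "finite A" and pos: "\<And>i. i \<in> A \<Longrightarrow> b i > 0" and "{i\<in>S. i \<in> A} = A"
      using that assms finite_subset by auto
    moreover have "(\<Prod>i\<in>A. b i) \<noteq> 0"
      using prod_pos[of A b] pos by fastforce
    ultimately show ?thesis
      by (simp add: xlogx_def log_def ln_prod sum_distrib_left sum_divide_distrib)
  qed
  then have "(\<Sum>A\<in>Pow S. xlogx (\<Prod>i\<in>A. b i)) =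
               (\<Sum>A\<in>Pow S. \<Sum>i\<in>{i\<in>S. i \<in> A}. (\<Prod>j\<in>A. b j) * log 2 (b i))"
    by (rule sum.cong[OF refl])
  also have "\<dots> = (\<Sum>i\<in>S. (\<Sum>A\<in>{A\<in>Pow S. i \<in> A}. \<Prod>j\<in>A. b j) * log 2 (b i))"
    using assms(1) by (simp add: sum.swap_restrict sum_distrib_right)
  also have "\<dots> = (\<Sum>i\<in>S. (\<Prod>j\<in>S - {i}. 1 + b j) * b i * log 2 (b i))"
    using assms(1) by (intro sum.cong refl, subst sum_Pow_containing_prod) (simp_all add: mult_ac)
  finally show ?thesis .
qed

theorem proposition3:
  fixes a :: "nat \<Rightarrow> real" and n :: nat
  assumes "\<forall>k\<ge>1. 0 < a k \<and> a k \<le> 1"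
    and "n \<ge> 1"
  shows "fourier_entropy n (Pn a n) =
           - (\<Sum>i=1..n. (\<Prod>j\<in>{1..n} - {i}. 1 + (a j)^2) * (a i)^2 * log 2 ((a i)^2))
       \<and> fourier_entropy n (Qn a n) =
           - (\<Sum>i=1..n. (\<Prod>j\<in>{1..n} - {i}. 1 + (a j)^2) * (a i)^2 * log 2 ((a i)^2))"
proof -
  have "\<And>i. i \<in> {1..n} \<Longrightarrow> (a i)\<^sup>2 > 0"
    using assms(1) by auto
  note entropy = entropy_of_product_weights[OF finite_atLeastAtMost this]
  have "fourier_entropy n (Pn a n) = - (\<Sum>A\<in>Pow {1..n}. xlogx (\<Prod>i\<in>A. (a i)\<^sup>2))"
       "fourier_entropy n (Qn a n) = - (\<Sum>A\<in>Pow {1..n}. xlogx (\<Prod>i\<in>A. (a i)\<^sup>2))"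
    unfolding fourier_entropy_def by (auto intro!: sum.cong simp: fourier_Pn_Qn_squared)
  then show ?thesis
    using entropy by simp
qed

end
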